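(* Let $k\in(-\infty,0)\cup\{0,\omega\}\subset S^1$ and let $G^{\uparrow}_k=\{A\in O^{(k)}(4,\mathbb{R}) : a_{00}>0\}$ be the orthochronous subgroup of $O^{(k)}(4,\mathbb{R})$. Then $$\sup\left\{ \frac{|\mathbf{a_v}|}{a_{00}} : A\in G^{\uparrow}_k\right\}=c:=\sqrt{|k|}\in[0,\infty],$$ where by convention $\sqrt{|\omega|}=\infty$. That is, in a temporal linear model of spacetime, whose inertial frames have as transition matrices exactly the elements of $G^{\uparrow}_k$, the supremum of the speeds measured between inertial frames is $c$.
   Context: For $A\in GL(4,\mathbb{R})$ write $A=\begin{pmatrix} a_{00} & \mathbf{a_h}\\ \mathbf{a_v}^t & \hat A\end{pmatrix}$ with $a_{00}\in\mathbb{R}$, $\mathbf{a_h},\mathbf{a_v}\in\mathbb{R}^3$, $\hat A$ a $3\times3$ matrix; $|\mathbf{a_v}|$ is the Euclidean norm. If $A$ is the transition matrix (linear part of the affine coordinate change $(t,x)\mapsto(\bar t,\bar x)$) from a frame $R$ to a frame $\bar R$, the velocity of $R$ measured by $\bar R$ is $\mathbf{v}=\mathbf{a_v}/a_{00}$ and its speed is $|\mathbf{v}|$. Let $S^1=\mathbb{R}\cup\{\omega\}$ (extended real line with $\pm\infty$ identified to $\omega$). For $k\in\mathbb{R}$, $I^{(k)}=\mathrm{diag}(k,1,1,1)$ and $O^{(k)}(4,\mathbb{R})=\{A\in GL(4,\mathbb{R}) : (\det A)^2=1,\ A^tI^{(k)}A=I^{(k)}\}$; $O^{(\omega)}(4,\mathbb{R})=\{A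 : A^t\in O^{(0)}(4,\mathbb{R})\}$. *)

theory Defs
  imports "HOL-Analysis.Analysis" "HOL-Library.Extended_Real"
begin

datatype S1 = Fin real | Omega

text \<open>4x4 real matrices, indices 0..3 of the numeral type 4; index 0 is time.\<close>
type_synonym mat4 = "real^4^4"

definition Ik :: "real \<Rightarrow> mat4" where
  "Ik k = (\<chi> i j. if i = j then (if i = 0 then k else 1) else 0)"

definition Ok :: "real \<Rightarrow> mat4 set" where
  "Ok k = {A. (det A)^2 = 1 \<and> transpose A ** Ik k ** A = Ik k}"

definition OS1 :: "S1 \<Rightarrow> mat4 set" where
  "OS1 k = (case k of Fin r \<Rightarrow> Ok r | Omega \<Rightarrow> {A. transpose A \<in> Ok 0})"

definition Gup :: "S1 \<Rightarrow> mat4 set" where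
  "Gup k = {A \<in> OS1 k. A $ 0 $ 0 > 0}"

definition a00 :: "mat4 \<Rightarrow> real" where "a00 A = A $ 0 $ 0"

definition norm_av :: "mat4 \<Rightarrow> real" where
  "norm_av A = sqrt ((A $ 1 $ 0)^2 + (A $ 2 $ 0)^2 + (A $ 3 $ 0)^2)"

definition cS1 :: "S1 \<Rightarrow> ereal" where
  "cS1 k = (case k of Fin r \<Rightarrow> ereal (sqrt \<bar>r\<bar>) | Omega \<Rightarrow> \<infinity>)"

end

theory Submission
  imports Defs
begin

text \<open>The (0,0) entry of the defining identity A^t I^(k) A = I^(k) reads k a00^2 + |a_v|^2 = k,
  so for k <= 0 we get |a_v|^2 = |k| (a00^2 - 1) <= |k| a00^2, i.e. no speed exceeds sqrt |k|.
  Conversely the identity has speed 0; for k = -c^2 < 0 the Lorentz boost with velocity v has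
  speed |v| for every |v| < c; and for k = omega the Galilean boosts, whose transposes preserve
  the degenerate form diag(0,1,1,1), realise every speed.\<close>

lemma exhaust_4_from_0: "(x::4) = 0 \<or> x = 1 \<or> x = 2 \<or> x = 3"
  using exhaust_4[of x] by auto

lemma UNIV_4_from_0: "UNIV = {0, 1, 2, 3::4}"
  using exhaust_4_from_0 by auto

lemma forall_4_from_0: "(\<forall>i::4. P i) \<longleftrightarrow> P 0 \<and> P 1 \<and> P 2 \<and> P 3"
  by (metis exhaust_4_from_0)

lemma sum_UNIV_4: "sum f (UNIV::4 set) = f 0 + f 1 + f 2 + f 3"
  unfolding UNIV_4_from_0 by (simp add: ac_simps)

lemma prod_UNIV_4: "prod f (UNIV::4 set) = f 0 * f 1 * f 2 * f 3"
  unfolding UNIV_4_from_0 by (simp add: ac_simps)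

lemma not_less_zero_4: "\<not> (x::4) < 0"
  using Rep_bit0[of x] by (simp add: less_bit0_def bit0.Rep_0)

lemma mem_Gup_Fin_iff:
  "A \<in> Gup (Fin r) \<longleftrightarrow> (det A)^2 = 1 \<and> transpose A ** Ik r ** A = Ik r \<and> a00 A > 0"
  by (auto simp: Gup_def OS1_def Ok_def a00_def)


lemma det_Ik: "det (Ik k) = k"
  by (subst det_diagonal) (auto simp: Ik_def prod_UNIV_4)

lemma det_sq_eq_1_if_preserves_Ik:
  assumes "transpose A ** Ik k ** A = Ik k" and "k \<noteq> 0"
  shows "(det A)^2 = 1"
proof -
  have "(det A)^2 * k = k"
    using arg_cong[OF assms(1), of det] by (simp add: det_mul det_transpose det_Ik power2_eq_square)
  then show ?thesis
    using assms(2) by simp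
qed

lemma transpose_Ik_mult_00:
  "(transpose A ** Ik k ** A) $ 0 $ 0 = k * (a00 A)^2 + (norm_av A)^2"
  by (simp add: matrix_matrix_mult_def transpose_def Ik_def sum_UNIV_4 a00_def norm_av_def
      power2_eq_square)

lemma norm_av_sq_if_preserves_Ik:
  assumes "transpose A ** Ik k ** A = Ik k"
  shows "(norm_av A)^2 = k * (1 - (a00 A)^2)"
proof -
  have "k * (a00 A)^2 + (norm_av A)^2 = k"
    using transpose_Ik_mult_00[of A k] unfolding assms by (simp add: Ik_def)
  then show ?thesis
    by (simp add: algebra_simps)
qed

lemma speed_le_if_preserves_Ik:
  assumes "transpose A ** Ik r ** A = Ik r" and "r \<le> 0" and "a00 A > 0"
  shows "norm_av A / a00 A \<le> sqrt \<bar>r\<bar>"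
proof -
  have "(norm_av A)^2 = \<bar>r\<bar> * (a00 A)^2 - \<bar>r\<bar>"
    using norm_av_sq_if_preserves_Ik[OF assms(1)] assms(2) by (simp add: abs_of_nonpos algebra_simps)
  also have "\<dots> \<le> (sqrt \<bar>r\<bar> * a00 A)^2"
    by (simp add: power_mult_distrib)
  finally have "norm_av A \<le> sqrt \<bar>r\<bar> * a00 A"
    by (rule power2_le_imp_le) (use assms(3) in simp)
  then show ?thesis
    using assms(3) by (simp add: divide_le_eq)
qed

definition lorentz_boost :: "real \<Rightarrow> real \<Rightarrow> mat4" where
  "lorentz_boost c v = (let \<gamma> = c / sqrt (c^2 - v^2) in
     \<chi> i j. if i = j then (if i = 0 \<or> i = 1 then \<gamma> else 1)
            else if i = 0 \<and> j = 1 then \<gamma> * v / c^2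
            else if i = 1 \<and> j = 0 then \<gamma> * v
            else 0)"

lemma
  assumes "\<bar>v\<bar> < c"
  shows lorentz_boost_in_Gup_Fin: "lorentz_boost c v \<in> Gup (Fin (-(c^2)))"
    and speed_lorentz_boost: "norm_av (lorentz_boost c v) / a00 (lorentz_boost c v) = \<bar>v\<bar>"
proof -
  define \<gamma> where "\<gamma> = c / sqrt (c^2 - v^2)"
  have c_pos: "c > 0"
    using assms by linarith
  have "v^2 < c^2"
    using assms abs_le_square_iff[of c v] by auto
  then have \<gamma>_pos: "\<gamma> > 0" and \<gamma>_sq: "\<gamma>^2 * (c^2 - v^2) = c^2"
    using c_pos by (auto simp: \<gamma>_def power_divide)
  have L: "lorentz_boost c v = (\<chi> i j. if i = j then (if i = 0 \<or> i = 1 then \<gamma> else 1)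
            else if i = 0 \<and> j = 1 then \<gamma> * v / c^2
            else if i = 1 \<and> j = 0 then \<gamma> * v
            else 0)"
    unfolding lorentz_boost_def \<gamma>_def Let_def ..
  have preserves: "transpose (lorentz_boost c v) ** Ik (-(c^2)) ** lorentz_boost c v = Ik (-(c^2))"
    unfolding L using c_pos \<gamma>_sq
    by (simp add: vec_eq_iff forall_4_from_0 matrix_matrix_mult_def transpose_def Ik_def
        sum_UNIV_4 field_simps power2_eq_square)
  moreover have "(det (lorentz_boost c v))^2 = 1"
    using det_sq_eq_1_if_preserves_Ik[OF preserves] c_pos by simp
  moreover have "a00 (lorentz_boost c v) = \<gamma>"
    by (simp add: L a00_def)
  ultimately show "lorentz_boost c v \<in> Gup (Fin (-(c^2)))"
    using \<gamma>_pos by (simp add: mem_Gup_Fin_iff)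
  show "norm_av (lorentz_boost c v) / a00 (lorentz_boost c v) = \<bar>v\<bar>"
    using \<gamma>_pos by (simp add: L norm_av_def a00_def abs_mult)
qed

definition galilei_boost :: "real \<Rightarrow> mat4" where
  "galilei_boost v = (\<chi> i j. if i = j then 1 else if i = 1 \<and> j = 0 then v else 0)"

lemma galilei_boost_in_Gup_Omega: "galilei_boost v \<in> Gup Omega"
proof -
  have "transpose (transpose (galilei_boost v)) ** Ik 0 ** transpose (galilei_boost v) = Ik 0"
    by (simp add: galilei_boost_def vec_eq_iff forall_4_from_0 matrix_matrix_mult_def transpose_def
        Ik_def sum_UNIV_4)
  moreover have "det (transpose (galilei_boost v)) = 1"
    unfolding det_transpose
    by (subst det_lowerdiagonal) (auto simp: galilei_boost_def prod_UNIV_4 not_less_zero_4)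
  moreover have "galilei_boost v $ 0 $ 0 = 1"
    by (simp add: galilei_boost_def)
  ultimately show ?thesis
    by (simp add: Gup_def OS1_def Ok_def)
qed

lemma speed_galilei_boost: "norm_av (galilei_boost v) / a00 (galilei_boost v) = \<bar>v\<bar>"
  by (simp add: galilei_boost_def norm_av_def a00_def)

lemma mat_1_in_Gup_Fin: "mat 1 \<in> Gup (Fin r)"
proof -
  have "a00 (mat 1) = 1"
    by (simp add: a00_def mat_def)
  then show ?thesis
    by (simp add: mem_Gup_Fin_iff transpose_mat det_I)
qed

lemma speed_mat_1: "norm_av (mat 1) / a00 (mat 1) = 0"
  by (simp add: norm_av_def mat_def)

lemma Gup_Fin_speed_le:
  assumes "A \<in> Gup (Fin r)" and "r \<le> 0"
  shows "norm_av A / a00 A \<le> sqrt \<bar>r\<bar>"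
  using assms speed_le_if_preserves_Ik by (simp add: mem_Gup_Fin_iff)

lemma Gup_Fin_attains_speed:
  assumes "r \<le> 0" and "0 \<le> v" and "v = 0 \<or> v < sqrt \<bar>r\<bar>"
  shows "\<exists>A \<in> Gup (Fin r). norm_av A / a00 A = v"
  using assms(3)
proof
  assume "v = 0"
  then show ?thesis
    using mat_1_in_Gup_Fin speed_mat_1 by blast
next
  assume "v < sqrt \<bar>r\<bar>"
  moreover have "r = -((sqrt \<bar>r\<bar>)^2)"
    using assms(1) by simp
  ultimately show ?thesis
    using lorentz_boost_in_Gup_Fin speed_lorentz_boost assms(2) by (metis abs_of_nonneg)
qed

lemma Gup_Omega_attains_speed:
  assumes "0 \<le> v"
  shows "\<exists>A \<in> Gup Omega. norm_av A / a00 A = v"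
  using galilei_boost_in_Gup_Omega speed_galilei_boost assms by (metis abs_of_nonneg)

lemma Sup_ereal_eqI_attained_below:
  fixes f :: "'a \<Rightarrow> real" and c :: ereal
  assumes upper: "\<And>a. a \<in> S \<Longrightarrow> ereal (f a) \<le> c"
    and attained: "\<And>v. 0 \<le> v \<Longrightarrow> v = 0 \<or> ereal v < c \<Longrightarrow> \<exists>a \<in> S. f a = v"
  shows "Sup {ereal (f a) | a. a \<in> S} = c"
proof (rule antisym)
  show "Sup {ereal (f a) | a. a \<in> S} \<le> c"
    using upper by (auto intro: Sup_least)
  have attained_ereal: "ereal v \<le> Sup {ereal (f a) | a. a \<in> S}"
    if "0 \<le> v" and "v = 0 \<or> ereal v < c" for v
    using attained[OF that] by (auto intro: Sup_upper)
  show "c \<le> Sup {ereal (f a) | a. a \<in> S}"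
  proof (rule dense_le)
    fix x assume "x < c"
    show "x \<le> Sup {ereal (f a) | a. a \<in> S}"
    proof (cases "x < 0")
      case True
      then show ?thesis
        using attained_ereal[of 0] by (simp add: zero_ereal_def[symmetric])
    next
      case False
      with \<open>x < c\<close> obtain v where "x = ereal v" and "0 \<le> v"
        by (cases x) auto
      with \<open>x < c\<close> show ?thesis
        using attained_ereal by simp
    qed
  qed
qed

theorem mainTheorem3:
  fixes k :: S1
  assumes "k = Omega \<or> (\<exists>r. k = Fin r \<and> r \<le> 0)"
  shows "Sup {ereal (norm_av A / a00 A) | A. A \<in> Gup k} = cS1 k"
proof (cases k)
  case Omega
  then show ?thesis
    using Gup_Omega_attains_speed by (intro Sup_ereal_eqI_attained_below) (auto simp: cS1_def)
next
  case (Fin r)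
  with assms have "r \<le> 0"
    by simp
  then show ?thesis
    using Gup_Fin_speed_le Gup_Fin_attains_speed
    by (intro Sup_ereal_eqI_attained_below) (auto simp: Fin cS1_def)
qed

end
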